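(* Let $X$ be a real Hilbert space, let $U$ be a closed affine subspace of $X$ and $V$ a nonempty closed convex subset of $X$, let $T:=T_{U,V}$, $v:=P_{\overline{\operatorname{ran}}(\mathrm{Id}-T)}0$, and assume $v\in\operatorname{ran}(\mathrm{Id}-T)$. Then for every $x\in X$, $P_UT^nx-P_UT^{n+1}x\to0$.
   Context: $T_{U,V}:=\mathrm{Id}-P_U+P_V(2P_U-\mathrm{Id})$, the Douglas–Rachford operator for the normal cones of $U$ and $V$; $P_C$ denotes projection onto $C$. *)

theory Defs
  imports "HOL-Analysis.Analysis"
begin

text \<open>Metric projection onto C (the library's closest_point requires heine_borel,
  i.e. finite dimension, so we use the same definition for a general inner product space).\<close>
definition proj :: "'a::real_inner set \<Rightarrow> 'a \<Rightarrow> 'a" where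
  "proj C x = (SOME p. p \<in> C \<and> (\<forall>y\<in>C. dist x p \<le> dist x y))"

definition DR_op :: "'a::real_inner set \<Rightarrow> 'a set \<Rightarrow> 'a \<Rightarrow> 'a" where
  "DR_op U V x = x - proj U x + proj V (2 *\<^sub>R proj U x - x)"

end

theory Submission
  imports Defs
begin

text \<open>The Douglas--Rachford operator T is firmly nonexpansive, so its displacement Id - T is
  monotone and the closure of its range is convex; hence the hypothesis says that the element v of
  least norm in that closure is a displacement v = y - T y. Fejer monotonicity of the orbits with
  respect to the orbit of y then yields (Id - T) T^n x \<longrightarrow> v. Writing p = P_U y and
  q = P_V (2 p - y), one has v = p - q and, by minimality of v, P_U q = p. Since P_U is affine with
  nonexpansive linear part L, P_U T^n x - P_U T^(n+1) x = L ((Id - T) T^n x - v) \<longrightarrow> 0.\<close>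

lemma parallelogram_midpoint:
  fixes s t x :: "'a::real_inner"
  shows "norm (s - t)^2 = 2 * norm (x - s)^2 + 2 * norm (x - t)^2 - 4 * norm (x - (1/2) *\<^sub>R (s + t))^2"
  by (simp add: power2_norm_eq_inner inner_diff_left inner_diff_right inner_commute algebra_simps)

lemma nearest_point_exists:
  fixes S :: "'a::{real_inner,complete_space} set"
  assumes "closed S" and "convex S" and "S \<noteq> {}"
  shows "\<exists>p\<in>S. \<forall>y\<in>S. dist x p \<le> dist x y"
proof -
  define d where "d = infdist x S"
  have d_le: "d \<le> dist x y" if "y \<in> S" for y
    unfolding d_def using that by (rule infdist_le)
  have "\<exists>s\<in>S. norm (x - s)^2 < d^2 + 1 / (real n + 1)" for n
  proof -
    have "d < sqrt (d^2 + 1 / (real n + 1))"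
      using real_less_rsqrt[of d "d^2 + 1 / (real n + 1)"] by (simp add: add_pos_pos)
    then obtain s where "s \<in> S" "dist x s < sqrt (d^2 + 1 / (real n + 1))"
      using assms(3) unfolding d_def infdist_notempty[OF assms(3)]
      by (subst (asm) cINF_less_iff) auto
    moreover have "(sqrt (d^2 + 1 / (real n + 1)))^2 = d^2 + 1 / (real n + 1)"
      by simp
    ultimately show ?thesis
      by (metis dist_norm norm_ge_zero power_strict_mono zero_less_numeral)
  qed
  then obtain s where s_in: "\<And>n. s n \<in> S"
    and s_close: "\<And>n. norm (x - s n)^2 < d^2 + 1 / (real n + 1)"
    by metis
  \<comment> \<open>midpoints stay in S, so by the parallelogram law a minimizing sequence is Cauchy\<close>
  have s_Cauchy: "Cauchy s"
  proof (rule CauchyI)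
    fix e :: real
    assume "e > 0"
    obtain M :: nat where M: "4 / e^2 < real M"
      using reals_Archimedean2 by blast
    have M_bound: "4 / (real M + 1) < e^2"
      using M \<open>e > 0\<close> by (simp add: field_simps) (smt (verit) mult_pos_pos zero_less_power)
    show "\<exists>M. \<forall>m\<ge>M. \<forall>n\<ge>M. norm (s m - s n) < e"
    proof (intro exI allI impI)
      fix m n
      assume "M \<le> m" "M \<le> n"
      have "(1/2) *\<^sub>R (s m + s n) \<in> S"
        using convexD[OF assms(2) s_in s_in, of "1/2" "1/2"] by (simp add: scaleR_add_right)
      then have "d^2 \<le> norm (x - (1/2) *\<^sub>R (s m + s n))^2"
        using d_le infdist_nonneg[of x S] unfolding d_def dist_norm by (simp add: power_mono)
      then have "norm (s m - s n)^2 \<le> 2 / (real m + 1) + 2 / (real n + 1)"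
        using parallelogram_midpoint[of "s m" "s n" x] s_close[of m] s_close[of n] by linarith
      also have "\<dots> \<le> 2 / (real M + 1) + 2 / (real M + 1)"
        using \<open>M \<le> m\<close> \<open>M \<le> n\<close> by (intro add_mono divide_left_mono) auto
      also have "\<dots> = 4 / (real M + 1)"
        by simp
      also note M_bound
      finally have "norm (s m - s n)^2 < e^2" .
      then show "norm (s m - s n) < e"
        by (rule power_less_imp_less_base) (use \<open>e > 0\<close> in linarith)
    qed
  qed
  then obtain p where s_lim: "s \<longlonglongrightarrow> p"
    using convergent_eq_Cauchy by blast
  have "p \<in> S"
    using closed_sequentially[OF assms(1)] s_in s_lim by blast
  moreover have "norm (x - p)^2 \<le> d^2"
  proof (rule LIMSEQ_le)
    show "(\<lambda>n. norm (x - s n)^2) \<longlonglongrightarrow> norm (x - p)^2"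
      by (intro tendsto_intros s_lim)
    show "(\<lambda>n. d^2 + 1 / (real n + 1)) \<longlonglongrightarrow> d^2"
      using LIMSEQ_inverse_real_of_nat_add[of "d^2"] by (simp add: inverse_eq_divide add.commute)
    show "\<exists>N. \<forall>n\<ge>N. norm (x - s n)^2 \<le> d^2 + 1 / (real n + 1)"
      using s_close less_imp_le by blast
  qed
  then have "dist x p \<le> d"
    unfolding dist_norm by (rule power2_le_imp_le) (simp add: d_def infdist_nonneg)
  ultimately show ?thesis
    using d_le by (meson order_trans)
qed

locale closed_convex_set =
  fixes S :: "'a::{real_inner,complete_space} set"
  assumes closed: "closed S" and convex: "convex S" and nonempty: "S \<noteq> {}"
begin

lemma proj_in: "proj S x \<in> S"
  and proj_nearest: "y \<in> S \<Longrightarrow> dist x (proj S x) \<le> dist x y"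
proof -
  have "\<exists>p. p \<in> S \<and> (\<forall>y\<in>S. dist x p \<le> dist x y)"
    using nearest_point_exists[OF closed convex nonempty] by blast
  from someI_ex[OF this] show "proj S x \<in> S" "y \<in> S \<Longrightarrow> dist x (proj S x) \<le> dist x y"
    unfolding proj_def by auto
qed

lemma inner_proj_le:
  assumes "y \<in> S"
  shows "inner (x - proj S x) (y - proj S x) \<le> 0"
proof (rule ccontr)
  define p where "p = proj S x"
  define c where "c = inner (x - p) (y - p)"
  define q where "q = norm (y - p)^2"
  assume "\<not> inner (x - proj S x) (y - proj S x) \<le> 0"
  then have "c > 0"
    unfolding c_def p_def by simp
  then have "q > 0"
    unfolding c_def q_def by (cases "y = p") auto
  \<comment> \<open>moving from p towards y by the step t decreases the distance to x\<close>
  define t where "t = min 1 (c / q)"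
  have t: "0 < t" "t \<le> 1" "t * q \<le> c"
    using \<open>c > 0\<close> \<open>q > 0\<close> unfolding t_def by (auto simp: min_def field_simps)
  have "(1 - t) *\<^sub>R p + t *\<^sub>R y \<in> S"
    using convexD[OF convex proj_in assms] t unfolding p_def by simp
  moreover have "x - ((1 - t) *\<^sub>R p + t *\<^sub>R y) = (x - p) - t *\<^sub>R (y - p)"
    by (simp add: algebra_simps)
  ultimately have "norm (x - p) \<le> norm ((x - p) - t *\<^sub>R (y - p))"
    using proj_nearest unfolding p_def dist_norm by metis
  then have "norm (x - p)^2 \<le> norm ((x - p) - t *\<^sub>R (y - p))^2"
    by (simp add: power_mono)
  also have "\<dots> = norm (x - p)^2 - 2 * t * c + t * (t * q)"
    unfolding c_def q_def power2_norm_eq_inner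
    by (simp add: inner_diff_left inner_diff_right inner_commute algebra_simps)
  also have "\<dots> < norm (x - p)^2"
    using t \<open>c > 0\<close> mult_left_mono[OF t(3), of t] by simp
  finally show False
    by simp
qed

lemma proj_eqI:
  assumes "p \<in> S" and "\<And>y. y \<in> S \<Longrightarrow> inner (x - p) (y - p) \<le> 0"
  shows "proj S x = p"
proof -
  have "inner (x - p) (proj S x - p) \<le> 0"
    using assms proj_in by blast
  moreover have "inner (x - proj S x) (p - proj S x) \<le> 0"
    using inner_proj_le[OF assms(1)] .
  ultimately have "inner (proj S x - p) (proj S x - p) \<le> 0"
    by (simp add: inner_diff_left inner_diff_right inner_commute algebra_simps)
  then show ?thesis
    using inner_ge_zero[of "proj S x - p"] by simp
qed

lemma proj_idem: "x \<in> S \<Longrightarrow> proj S x = x"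
  by (rule proj_eqI) auto

lemma proj_eq_if_nearest:
  assumes "p \<in> S" and "\<And>y. y \<in> S \<Longrightarrow> dist x p \<le> dist x y"
  shows "proj S x = p"
proof -
  define q where "q = proj S x"
  have "norm (x - p) \<le> norm (x - q)"
    using assms(2)[OF proj_in] unfolding q_def by (simp add: dist_norm)
  then have "norm (x - p)^2 \<le> norm (x - q)^2"
    by (simp add: power_mono)
  moreover have "norm (x - p)^2 = norm (x - q)^2 - 2 * inner (x - q) (p - q) + norm (p - q)^2"
    unfolding power2_norm_eq_inner by (simp add: inner_diff_left inner_diff_right inner_commute)
  moreover have "inner (x - q) (p - q) \<le> 0"
    unfolding q_def by (rule inner_proj_le[OF assms(1)])
  ultimately have "norm (p - q)^2 \<le> 0"
    by linarith
  then show ?thesis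
    unfolding q_def by simp
qed

lemma proj_firmly_nonexpansive:
  "norm (proj S a - proj S b)^2 \<le> inner (a - b) (proj S a - proj S b)"
proof -
  have "inner (a - proj S a) (proj S b - proj S a) \<le> 0"
    by (rule inner_proj_le[OF proj_in])
  moreover have "inner (b - proj S b) (proj S a - proj S b) \<le> 0"
    by (rule inner_proj_le[OF proj_in])
  ultimately show ?thesis
    by (simp add: power2_norm_eq_inner inner_diff_left inner_diff_right inner_commute algebra_simps)
qed

lemma proj_nonexpansive: "norm (proj S a - proj S b) \<le> norm (a - b)"
proof -
  have "norm (proj S a - proj S b)^2 \<le> norm (a - b) * norm (proj S a - proj S b)"
    using proj_firmly_nonexpansive[of a b] Cauchy_Schwarz_ineq2[of "a - b" "proj S a - proj S b"]
    by linarith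
  then show ?thesis
    by (cases "proj S a = proj S b") (auto simp: power2_eq_square mult_le_cancel_right)
qed

lemma reflection_nonexpansive:
  "norm ((2 *\<^sub>R proj S a - a) - (2 *\<^sub>R proj S b - b)) \<le> norm (a - b)"
proof -
  define w where "w = a - b"
  define p where "p = proj S a - proj S b"
  have "(2 *\<^sub>R proj S a - a) - (2 *\<^sub>R proj S b - b) = 2 *\<^sub>R p - w"
    unfolding p_def w_def by (simp add: algebra_simps)
  moreover have "norm (2 *\<^sub>R p - w)^2 = 4 * norm p^2 - 4 * inner w p + norm w^2"
    unfolding power2_norm_eq_inner
    by (simp add: inner_diff_left inner_diff_right inner_commute algebra_simps)
  moreover have "norm p^2 \<le> inner w p"
    unfolding p_def w_def by (rule proj_firmly_nonexpansive)
  ultimately have "norm ((2 *\<^sub>R proj S a - a) - (2 *\<^sub>R proj S b - b))^2 \<le> norm w^2"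
    by simp
  then show ?thesis
    unfolding w_def by (rule power2_le_imp_le) simp
qed

end

locale closed_affine_set = closed_convex_set +
  assumes affine: "affine S"
begin

lemma inner_proj_eq_0:
  assumes "u \<in> S"
  shows "inner (x - proj S x) (u - proj S x) = 0"
proof -
  define p where "p = proj S x"
  have "2 *\<^sub>R p + (-1) *\<^sub>R u \<in> S"
    using affine proj_in assms unfolding affine_def p_def
    by (metis (no_types) add_diff_cancel_right' diff_minus_eq_add one_add_one)
  moreover have "2 *\<^sub>R p + (-1) *\<^sub>R u - p = - (u - p)"
    by (simp add: algebra_simps scaleR_2)
  ultimately have "inner (x - p) (- (u - p)) \<le> 0"
    using inner_proj_le unfolding p_def by metis
  moreover have "inner (x - p) (u - p) \<le> 0"
    using inner_proj_le[OF assms] unfolding p_def .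
  ultimately show ?thesis
    unfolding p_def by (simp add: inner_diff_right)
qed

lemma proj_midpoint: "proj S ((1/2) *\<^sub>R (a + b)) = (1/2) *\<^sub>R (proj S a + proj S b)"
proof (rule proj_eqI)
  define m where "m = (1/2) *\<^sub>R (proj S a + proj S b)"
  show "m \<in> S"
    using affine proj_in unfolding affine_def m_def by (simp add: scaleR_add_right)
  fix u
  assume "u \<in> S"
  have orth: "inner (y - proj S y) (u - m) = 0" for y
    using inner_proj_eq_0[OF \<open>u \<in> S\<close>, of y] inner_proj_eq_0[OF \<open>m \<in> S\<close>, of y]
    by (simp add: inner_diff_right)
  have "(1/2) *\<^sub>R (a + b) - m = (1/2) *\<^sub>R (a - proj S a) + (1/2) *\<^sub>R (b - proj S b)"
    unfolding m_def by (simp add: algebra_simps)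
  then show "inner ((1/2) *\<^sub>R (a + b) - m) (u - m) \<le> 0"
    using orth[of a] orth[of b] by (simp add: inner_add_left)
qed

text \<open>The projection onto an affine set is an affine map whose linear part is nonexpansive.\<close>
lemma norm_proj_diff_diff_le:
  "norm ((proj S a - proj S b) - (proj S c - proj S d)) \<le> norm ((a - b) - (c - d))"
proof -
  have "(proj S a - proj S b) - (proj S c - proj S d)
      = 2 *\<^sub>R (proj S ((1/2) *\<^sub>R (a + d)) - proj S ((1/2) *\<^sub>R (b + c)))"
    unfolding proj_midpoint by (simp add: algebra_simps scaleR_2)
  then have "norm ((proj S a - proj S b) - (proj S c - proj S d))
      \<le> 2 * norm ((1/2) *\<^sub>R (a + d) - (1/2) *\<^sub>R (b + c))"
    using proj_nonexpansive by simp
  also have "\<dots> = norm ((a - b) - (c - d))"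
  proof -
    have "(1/2) *\<^sub>R (a + d) - (1/2) *\<^sub>R (b + c) = (1/2) *\<^sub>R ((a - b) - (c - d))"
      by (simp add: algebra_simps)
    then show ?thesis
      by simp
  qed
  finally show ?thesis .
qed

end

lemma quadratic_bound:
  fixes E a D :: real
  assumes "0 \<le> a" and "0 \<le> D" and "E^2 \<le> a * (E + D)"
  shows "E \<le> a + sqrt (a * D)"
proof (cases "E \<le> a")
  case False
  then have "(E - a)^2 \<le> E^2 - a * E"
    using assms(1) by (simp add: power2_eq_square algebra_simps mult_right_mono)
  also have "\<dots> \<le> a * D"
    using assms(3) by (simp add: algebra_simps)
  finally show ?thesis
    using False real_le_rsqrt by fastforce
next
  case True
  moreover have "0 \<le> sqrt (a * D)"
    using assms by simp
  ultimately show ?thesis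
    by linarith
qed

locale firmly_nonexpansive =
  fixes T :: "'a::{real_inner,complete_space} \<Rightarrow> 'a"
  assumes firmly_nonexpansive:
    "\<And>a b. norm (T a - T b)^2 + norm ((a - T a) - (b - T b))^2 \<le> norm (a - b)^2"
begin

definition disp :: "'a \<Rightarrow> 'a" where "disp y = y - T y"

lemma nonexpansive: "norm (T a - T b) \<le> norm (a - b)"
proof (rule power2_le_imp_le)
  show "norm (T a - T b)^2 \<le> norm (a - b)^2"
    using firmly_nonexpansive[of a b] zero_le_power2[of "norm ((a - T a) - (b - T b))"]
    by linarith
qed simp

lemma disp_monotone: "inner (disp a - disp b) (a - b) \<ge> 0"
proof -
  have "T a - T b = (a - b) - (disp a - disp b)"
    unfolding disp_def by simp
  then have "norm ((a - b) - (disp a - disp b))^2 + norm (disp a - disp b)^2 \<le> norm (a - b)^2"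
    using firmly_nonexpansive[of a b] unfolding disp_def by simp
  then have "2 * norm (disp a - disp b)^2 \<le> 2 * inner (disp a - disp b) (a - b)"
    unfolding power2_norm_eq_inner
    by (simp add: inner_diff_left inner_diff_right inner_commute algebra_simps)
  then show ?thesis
    using zero_le_power2[of "norm (disp a - disp b)"] by linarith
qed

text \<open>The resolvent of the monotone operator disp: w is the fixed point of the contraction
  w \<mapsto> (x + T w) / (1 + l).\<close>
lemma resolvent_exists:
  assumes "l > 0"
  shows "\<exists>w. disp w + l *\<^sub>R w = x"
proof -
  define g where "g w = (1 / (1 + l)) *\<^sub>R (x + T w)" for w
  have "\<exists>!w. g w = w"
  proof (rule banach_fix_type[of "1 / (1 + l)"])
    show "0 \<le> 1 / (1 + l)" "1 / (1 + l) < 1"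
      using assms by auto
    show "\<forall>a b. dist (g a) (g b) \<le> 1 / (1 + l) * dist a b"
    proof (intro allI)
      fix a b
      have "g a - g b = (1 / (1 + l)) *\<^sub>R (T a - T b)"
        unfolding g_def by (simp add: scaleR_add_right scaleR_diff_right)
      then show "dist (g a) (g b) \<le> 1 / (1 + l) * dist a b"
        using nonexpansive[of a b] assms by (simp add: dist_norm divide_simps)
    qed
  qed
  then obtain w where "g w = w"
    by blast
  then have "(1 + l) *\<^sub>R w = x + T w"
    unfolding g_def using assms by (metis add_pos_pos less_numeral_extra(1) less_irrefl
        scaleR_scaleR right_inverse scaleR_one divide_inverse_commute mult_1)
  then show ?thesis
    unfolding disp_def by (auto simp: algebra_simps)
qed

lemma resolvent_ineq:
  assumes "l > 0" and "disp w + l *\<^sub>R w = x"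
  shows "norm (x - disp w)^2
    \<le> inner (x - disp u) (x - disp w) + l * ((norm (x - disp w) + norm (x - disp u)) * norm u)"
proof -
  define z where "z = disp w"
  have "l *\<^sub>R (w - u) = (x - z) - l *\<^sub>R u"
    using assms(2) unfolding z_def by (simp add: algebra_simps)
  then have "0 \<le> inner (z - disp u) ((x - z) - l *\<^sub>R u)"
    using disp_monotone[of w u] assms(1) unfolding z_def
    by (metis inner_scaleR_right zero_le_mult_iff less_imp_le not_le)
  also have "\<dots> = inner (x - disp u) (x - z) - norm (x - z)^2 - l * inner (z - disp u) u"
    unfolding power2_norm_eq_inner
    by (simp add: inner_diff_left inner_diff_right inner_commute algebra_simps)
  finally have mono: "norm (x - z)^2 \<le> inner (x - disp u) (x - z) + l * (- inner (z - disp u) u)"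
    by simp
  have "- inner (z - disp u) u \<le> (norm (x - z) + norm (x - disp u)) * norm u"
  proof -
    have "- inner (z - disp u) u \<le> norm (z - disp u) * norm u"
      using Cauchy_Schwarz_ineq2[of "z - disp u" u] by simp
    moreover have "norm (z - disp u) \<le> norm (x - z) + norm (x - disp u)"
      using norm_triangle_ineq[of "z - x" "x - disp u"] by (simp add: norm_minus_commute)
    ultimately show ?thesis
      by (meson mult_right_mono norm_ge_zero order_trans)
  qed
  then show ?thesis
    using mono mult_left_mono[OF _ less_imp_le[OF assms(1)]] unfolding z_def by fastforce
qed


text \<open>Minty-type argument: the resolvent points w with disp w + l w = x satisfy
  disp w \<longrightarrow> x as l \<longrightarrow> 0.\<close>
lemma convex_combination_in_closure_range_disp:
  assumes "0 \<le> t" and "t \<le> 1"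
  shows "t *\<^sub>R disp u1 + (1 - t) *\<^sub>R disp u2 \<in> closure (range disp)"
proof -
  define x where "x = t *\<^sub>R disp u1 + (1 - t) *\<^sub>R disp u2"
  define M where "M = norm u1 + norm u2"
  define D where "D = norm (x - disp u1) + norm (x - disp u2)"
  define l where "l n = inverse (real (Suc n))" for n
  have l_pos: "l n > 0" for n
    unfolding l_def by simp
  define w where "w n = (SOME w. disp w + l n *\<^sub>R w = x)" for n
  have w: "disp (w n) + l n *\<^sub>R w n = x" for n
    unfolding w_def by (rule someI_ex[OF resolvent_exists[OF l_pos]])
  have bound: "norm (x - disp (w n)) \<le> l n * M + sqrt (l n * M * D)" for n
  proof -
    define E where "E = norm (x - disp (w n))"
    define R where "R = l n * ((E + D) * M)"
    define I where "I u = inner (x - disp u) (x - disp (w n))" for u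
    have estimate: "E^2 \<le> I u + R" if "u = u1 \<or> u = u2" for u
    proof -
      have "(E + norm (x - disp u)) * norm u \<le> (E + D) * M"
        using that unfolding E_def D_def M_def by (intro mult_mono) auto
      then have "l n * ((E + norm (x - disp u)) * norm u) \<le> R"
        using l_pos[of n] unfolding R_def by (simp add: mult_left_mono)
      then show ?thesis
        using resolvent_ineq[OF l_pos[of n] w[of n], of u] unfolding E_def I_def by linarith
    qed
    \<comment> \<open>in the convex combination of the two estimates the inner products cancel\<close>
    have "t * I u1 + (1 - t) * I u2 = 0"
    proof -
      have "t *\<^sub>R (x - disp u1) + (1 - t) *\<^sub>R (x - disp u2) = 0"
        unfolding x_def by (simp add: algebra_simps)
      then show ?thesis
        unfolding I_def by (metis inner_add_left inner_scaleR_left inner_zero_left)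
    qed
    moreover have "t * E^2 + (1 - t) * E^2 \<le> t * (I u1 + R) + (1 - t) * (I u2 + R)"
      using assms estimate by (intro add_mono mult_left_mono) auto
    ultimately have "E^2 \<le> R"
      by (simp add: algebra_simps)
    then have "E^2 \<le> (l n * M) * (E + D)"
      unfolding R_def by (simp add: algebra_simps)
    then show ?thesis
      using quadratic_bound[of "l n * M" D E] l_pos[of n] unfolding E_def D_def M_def
      by (simp add: mult.assoc)
  qed
  have "(\<lambda>n. l n * M + sqrt (l n * M * D)) \<longlonglongrightarrow> 0 * M + sqrt (0 * M * D)"
    unfolding l_def by (intro tendsto_intros LIMSEQ_inverse_real_of_nat)
  then have "(\<lambda>n. l n * M + sqrt (l n * M * D)) \<longlonglongrightarrow> 0"
    by simp
  moreover have "\<forall>n. norm (disp (w n) - x) \<le> l n * M + sqrt (l n * M * D)"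
    using bound by (metis norm_minus_commute)
  ultimately have "(\<lambda>n. disp (w n) - x) \<longlonglongrightarrow> 0"
    by (metis (no_types, lifting) Lim_null_comparison always_eventually)
  then have "(\<lambda>n. disp (w n)) \<longlonglongrightarrow> x"
    by (rule LIM_zero_cancel)
  then have "x \<in> closure (range disp)"
    unfolding closure_sequential by (intro exI[of _ "\<lambda>n. disp (w n)"]) simp
  then show ?thesis
    unfolding x_def .
qed

lemma convex_closure_range_disp: "convex (closure (range disp))"
proof (rule convexI)
  fix a b :: 'a and u v :: real
  assume a: "a \<in> closure (range disp)" and b: "b \<in> closure (range disp)"
    and "0 \<le> u" "0 \<le> v" "u + v = 1"
  define f where "f p = u *\<^sub>R fst p + v *\<^sub>R snd p" for p :: "'a \<times> 'a"
  have "f ` (range disp \<times> range disp) \<subseteq> closure (range disp)"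
    using convex_combination_in_closure_range_disp[of u] \<open>0 \<le> u\<close> \<open>0 \<le> v\<close> \<open>u + v = 1\<close>
    unfolding f_def by (auto simp: eq_diff_eq[symmetric])
  then have "f ` closure (range disp \<times> range disp) \<subseteq> closure (range disp)"
    unfolding f_def by (intro image_closure_subset continuous_intros) auto
  then show "u *\<^sub>R a + v *\<^sub>R b \<in> closure (range disp)"
    using a b unfolding closure_Times f_def by force
qed

lemma disp_iterate_eq_minimal:
  assumes minimal: "\<And>w. norm (disp y) \<le> norm (disp w)"
  shows "disp ((T ^^ n) y) = disp y"
proof (induction n)
  case (Suc n)
  define z where "z = (T ^^ n) y"
  have "norm (disp (T z))^2 + norm (disp z - disp (T z))^2 \<le> norm (disp z)^2"
    using firmly_nonexpansive[of z "T z"] unfolding disp_def by simp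
  moreover have "norm (disp z)^2 \<le> norm (disp (T z))^2"
    using minimal[of "T z"] Suc unfolding z_def by (simp add: power_mono)
  ultimately have "norm (disp z - disp (T z))^2 \<le> 0"
    by linarith
  then have "disp (T z) = disp z"
    by simp
  then show ?case
    using Suc unfolding z_def by simp
qed simp

text \<open>Fejer monotonicity with respect to the orbit of y: the squared displacement deviations
  are summable.\<close>
lemma disp_iterate_tendsto_minimal:
  assumes minimal: "\<And>w. norm (disp y) \<le> norm (disp w)"
  shows "(\<lambda>n. disp ((T ^^ n) x)) \<longlonglongrightarrow> disp y"
proof -
  define c where "c n = norm (disp ((T ^^ n) x) - disp y)^2" for n
  have step: "norm ((T ^^ Suc n) x - (T ^^ Suc n) y)^2 + c n \<le> norm ((T ^^ n) x - (T ^^ n) y)^2" for n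
    using firmly_nonexpansive[of "(T ^^ n) x" "(T ^^ n) y"] disp_iterate_eq_minimal[OF minimal, of n]
    unfolding c_def disp_def by simp
  have partial_sums: "(\<Sum>k\<le>n. c k) + norm ((T ^^ Suc n) x - (T ^^ Suc n) y)^2 \<le> norm (x - y)^2" for n
  proof (induction n)
    case 0
    show ?case
      using step[of 0] by simp
  next
    case (Suc n)
    show ?case
      using Suc step[of "Suc n"] by simp
  qed
  have "summable c"
  proof (rule bounded_imp_summable)
    show "0 \<le> c n" for n
      unfolding c_def by simp
    show "(\<Sum>k\<le>n. c k) \<le> norm (x - y)^2" for n
      using partial_sums[of n] zero_le_power2[of "norm ((T ^^ Suc n) x - (T ^^ Suc n) y)"] by linarith
  qed
  then have "(\<lambda>n. sqrt (c n)) \<longlonglongrightarrow> 0"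
    using tendsto_real_sqrt[OF summable_LIMSEQ_zero] by fastforce
  then have "(\<lambda>n. disp ((T ^^ n) x) - disp y) \<longlonglongrightarrow> 0"
    unfolding c_def by (simp add: tendsto_norm_zero_iff)
  then show ?thesis
    by (rule LIM_zero_cancel)
qed

end

lemma scaleR_half_add_half: "(1/2) *\<^sub>R x + (1/2) *\<^sub>R x = (x::'a::real_vector)"
  by (simp flip: scaleR_add_left)

lemma firmly_nonexpansive_average:
  fixes N :: "'a::{real_inner,complete_space} \<Rightarrow> 'a"
  assumes "\<And>a b. norm (N a - N b) \<le> norm (a - b)"
  shows "firmly_nonexpansive (\<lambda>z. (1/2) *\<^sub>R (z + N z))"
proof
  fix a b :: 'a
  define w where "w = a - b"
  define n where "n = N a - N b"
  have eq: "(1/2) *\<^sub>R (a + N a) - (1/2) *\<^sub>R (b + N b) = (1/2) *\<^sub>R (w + n)"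
    "(a - (1/2) *\<^sub>R (a + N a)) - (b - (1/2) *\<^sub>R (b + N b)) = (1/2) *\<^sub>R (w - n)"
    unfolding w_def n_def by (simp_all add: algebra_simps scaleR_half_add_half)
  have "norm ((1/2) *\<^sub>R (w + n))^2 + norm ((1/2) *\<^sub>R (w - n))^2 = (norm w^2 + norm n^2) / 2"
    unfolding power2_norm_eq_inner
    by (simp add: inner_diff_left inner_diff_right inner_add_left inner_add_right inner_commute
        algebra_simps)
  also have "\<dots> \<le> norm w^2"
    using assms[of a b] unfolding w_def n_def by (simp add: power_mono)
  finally show "norm ((1/2) *\<^sub>R (a + N a) - (1/2) *\<^sub>R (b + N b))^2
      + norm ((a - (1/2) *\<^sub>R (a + N a)) - (b - (1/2) *\<^sub>R (b + N b)))^2 \<le> norm (a - b)^2"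
    unfolding eq w_def .
qed

text \<open>T = (Id + R_V R_U) / 2 with the reflections R_C = 2 P_C - Id.\<close>
lemma DR_op_firmly_nonexpansive:
  assumes "closed_convex_set U" and "closed_convex_set V"
  shows "firmly_nonexpansive (DR_op U V)"
proof -
  define R where "R C z = 2 *\<^sub>R proj C z - z" for C and z :: 'a
  have DR_eq: "DR_op U V = (\<lambda>z. (1/2) *\<^sub>R (z + R V (R U z)))"
    unfolding DR_op_def R_def fun_eq_iff
    by (simp add: algebra_simps) (simp add: add.assoc[symmetric] scaleR_half_add_half)
  have "norm (R V (R U a) - R V (R U b)) \<le> norm (a - b)" for a b
    using closed_convex_set.reflection_nonexpansive[OF assms(2), of "R U a" "R U b"]
      closed_convex_set.reflection_nonexpansive[OF assms(1), of a b]
    unfolding R_def by linarith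
  then show ?thesis
    unfolding DR_eq by (rule firmly_nonexpansive_average)
qed

text \<open>With p = P_U y and q = P_V (2 p - y) one has y - T y = p - q, and z = 2 P_U q - q has
  displacement P_U q - q. If y has minimal displacement, p is therefore a point of U nearest to q.\<close>
lemma proj_DR_minimal_displacement:
  assumes U: "closed_affine_set U" and V: "closed_convex_set V"
    and minimal: "\<And>w. norm (y - DR_op U V y) \<le> norm (w - DR_op U V w)"
  shows "proj U (proj V (2 *\<^sub>R proj U y - y)) = proj U y"
proof -
  interpret U: closed_affine_set U by (fact U)
  interpret V: closed_convex_set V by (fact V)
  define p where "p = proj U y"
  define q where "q = proj V (2 *\<^sub>R p - y)"
  define c where "c = proj U q"
  define z where "z = 2 *\<^sub>R c - q"
  have "c \<in> U"
    unfolding c_def by (rule U.proj_in)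
  have "proj U z = c"
  proof (rule U.proj_eqI[OF \<open>c \<in> U\<close>])
    fix u
    assume "u \<in> U"
    have "z - c = - (q - c)"
      unfolding z_def by (simp add: algebra_simps scaleR_2)
    then have "inner (z - c) (u - c) = - inner (q - c) (u - c)"
      by (simp only: inner_minus_left)
    then show "inner (z - c) (u - c) \<le> 0"
      using U.inner_proj_eq_0[OF \<open>u \<in> U\<close>, of q] unfolding c_def by linarith
  qed
  then have "z - DR_op U V z = c - q"
    unfolding DR_op_def z_def q_def by (simp add: V.proj_idem[OF V.proj_in] algebra_simps)
  moreover have "y - DR_op U V y = p - q"
    unfolding DR_op_def p_def q_def by simp
  ultimately have "dist q p \<le> dist q c"
    using minimal[of z] by (simp add: dist_norm norm_minus_commute)
  then have "proj U q = p"
    using U.proj_nearest[of _ q] unfolding c_def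
    by (intro U.proj_eq_if_nearest) (auto simp: p_def U.proj_in intro: order_trans)
  then show ?thesis
    unfolding p_def q_def .
qed

lemma norm_proj_DR_step_le:
  assumes U: "closed_affine_set U" and V: "closed_convex_set V"
    and minimal: "\<And>w. norm (y - DR_op U V y) \<le> norm (w - DR_op U V w)"
  shows "norm (proj U a - proj U (DR_op U V a)) \<le> norm ((a - DR_op U V a) - (y - DR_op U V y))"
proof -
  interpret U: closed_affine_set U by (fact U)
  define p where "p = proj U y"
  define q where "q = proj V (2 *\<^sub>R p - y)"
  have "proj U q = proj U p"
    using proj_DR_minimal_displacement[OF U V minimal] U.proj_idem[OF U.proj_in]
    unfolding p_def q_def by simp
  moreover have "y - DR_op U V y = p - q"
    unfolding DR_op_def p_def q_def by simp
  ultimately show ?thesis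
    using U.norm_proj_diff_diff_le[of a "DR_op U V a" p q] by simp
qed

theorem proposition4p6:
  fixes U V :: "'a::{real_inner, complete_space} set" and x :: 'a
  assumes "affine U" and "closed U" and "U \<noteq> {}"
    and "convex V" and "closed V" and "V \<noteq> {}"
    and "proj (closure (range (\<lambda>y. y - DR_op U V y))) 0
           \<in> range (\<lambda>y. y - DR_op U V y)"
  shows "(\<lambda>n. proj U ((DR_op U V ^^ n) x)
              - proj U ((DR_op U V ^^ (Suc n)) x)) \<longlonglongrightarrow> 0"
proof -
  have U: "closed_affine_set U" and V: "closed_convex_set V"
    using assms(1-6) by unfold_locales (auto simp: affine_imp_convex)
  interpret T: firmly_nonexpansive "DR_op U V"
    using DR_op_firmly_nonexpansive[OF closed_affine_set.axioms(1)[OF U] V] .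
  have disp_eq: "(\<lambda>y. y - DR_op U V y) = T.disp"
    by (simp add: fun_eq_iff T.disp_def)
  interpret C: closed_convex_set "closure (range T.disp)"
    by unfold_locales (auto simp: T.convex_closure_range_disp)
  obtain y where y: "T.disp y = proj (closure (range T.disp)) 0"
    using assms(7) unfolding disp_eq by auto
  have minimal: "norm (T.disp y) \<le> norm (T.disp w)" for w
    using C.proj_nearest[of "T.disp w" 0] closure_subset[of "range T.disp"]
    unfolding y dist_norm by auto
  have "\<forall>n. norm (proj U ((DR_op U V ^^ n) x) - proj U ((DR_op U V ^^ Suc n) x))
      \<le> norm (T.disp ((DR_op U V ^^ n) x) - T.disp y)"
    using norm_proj_DR_step_le[OF U V minimal[unfolded T.disp_def]] by (simp add: T.disp_def)
  moreover have "(\<lambda>n. norm (T.disp ((DR_op U V ^^ n) x) - T.disp y)) \<longlonglongrightarrow> 0"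
    using T.disp_iterate_tendsto_minimal[OF minimal] by (intro tendsto_norm_zero LIM_zero)
  ultimately show ?thesis
    by (rule Lim_null_comparison[OF always_eventually])
qed

end
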